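(* Let $(\Omega,\mathcal{F})$ be a measurable space, $T:\Omega\to\Omega$ a measurable transformation and $V$ a $T$-invariant upper probability on $(\Omega,\mathcal{F})$. Then $V$ is ergodic if and only if there exists a probability $Q\in\mathcal{M}^e(T)\cap\operatorname{core}(V)$ such that for every $P\in\operatorname{core}(V)$, $P(A)=Q(A)$ for all $A\in\mathcal{I}$. Moreover, such a $Q$ is unique.
   Context: A capacity on $(\Omega,\mathcal{F})$ is a map $\mu:\mathcal{F}\to[0,1]$ with $\mu(\emptyset)=0$, $\mu(\Omega)=1$ and monotone. An upper probability is a capacity $V$ for which there is a weak*-compact set $\Lambda$ of probabilities (weak* = setwise convergence on $\mathcal{F}$) with $V(A)=\max_{P\in\Lambda}P(A)$ for all $A\in\mathcal{F}$. $V$ is $T$-invariant if $V(T^{-1}A)=V(A)$ for all $A$. $\mathcal{I}=\{A\in\mathcal{F}:T^{-1}A=A\}$. A $T$-invariant capacity $\mu$ is ergodic if for every $B\in\mathcal{I}$: $\mu(B)\in\{0,1\}$, and $\mu(B)=0$ or $\mu(\Omega\setminus B)=0$. $\operatorname{core}(\mu)$ is the set of finitely additive set functions $P:\mathcal{F}\to[0,1]$ with $P(\Omega)=1$ and $P(A)\le\mu(A)$ for all $A\in\mathcal{F}$ (for an upper probability these are all $\sigma$-additive). $\mathcal{M}^e(T)$ is the set of $T$-invariant probabilities $P$ on $(\Omega,\mathcal{F})$ that are ergodic, i.e. $P(A)\in\{0,1\}$ for all $A\in\mathcal{I}$. *)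

theory Defs
  imports "HOL-Analysis.Analysis"
begin

text \<open>Set functions on the measurable space M are represented as functions
  of type 'a set => real; only their values on sets M matter.\<close>

definition is_capacity :: "'a measure \<Rightarrow> ('a set \<Rightarrow> real) \<Rightarrow> bool" where
  "is_capacity M \<mu> \<longleftrightarrow>
     (\<forall>A\<in>sets M. 0 \<le> \<mu> A \<and> \<mu> A \<le> 1) \<and> \<mu> {} = 0 \<and> \<mu> (space M) = 1 \<and>
     (\<forall>A\<in>sets M. \<forall>B\<in>sets M. A \<subseteq> B \<longrightarrow> \<mu> A \<le> \<mu> B)"

definition is_prob :: "'a measure \<Rightarrow> ('a set \<Rightarrow> real) \<Rightarrow> bool" where
  "is_prob M P \<longleftrightarrow>
     (\<forall>A\<in>sets M. 0 \<le> P A) \<and> P (space M) = 1 \<and>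
     (\<forall>F::nat \<Rightarrow> 'a set. range F \<subseteq> sets M \<longrightarrow> disjoint_family F \<longrightarrow>
        (\<lambda>n. P (F n)) sums P (\<Union>n. F n))"

text \<open>Restriction of a set function to sets M (value 0 elsewhere); the product
  topology on 'a set => real of these restrictions is exactly the topology
  of setwise convergence on sets M.\<close>
definition restr_sf :: "'a measure \<Rightarrow> ('a set \<Rightarrow> real) \<Rightarrow> ('a set \<Rightarrow> real)" where
  "restr_sf M P = (\<lambda>A. if A \<in> sets M then P A else 0)"

definition upper_prob :: "'a measure \<Rightarrow> ('a set \<Rightarrow> real) \<Rightarrow> bool" where
  "upper_prob M V \<longleftrightarrow> is_capacity M V \<and>
     (\<exists>\<Lambda>. \<Lambda> \<subseteq> {P. is_prob M P} \<and> compact (restr_sf M ` \<Lambda>) \<and>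
        (\<forall>A\<in>sets M. (\<exists>P\<in>\<Lambda>. P A = V A) \<and> (\<forall>P\<in>\<Lambda>. P A \<le> V A)))"

definition sf_invariant :: "'a measure \<Rightarrow> ('a \<Rightarrow> 'a) \<Rightarrow> ('a set \<Rightarrow> real) \<Rightarrow> bool" where
  "sf_invariant M T \<mu> \<longleftrightarrow> (\<forall>A\<in>sets M. \<mu> (T -` A \<inter> space M) = \<mu> A)"

definition inv_sets :: "'a measure \<Rightarrow> ('a \<Rightarrow> 'a) \<Rightarrow> 'a set set" where
  "inv_sets M T = {A \<in> sets M. T -` A \<inter> space M = A}"

definition cap_ergodic :: "'a measure \<Rightarrow> ('a \<Rightarrow> 'a) \<Rightarrow> ('a set \<Rightarrow> real) \<Rightarrow> bool" where
  "cap_ergodic M T \<mu> \<longleftrightarrow> sf_invariant M T \<mu> \<and>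
     (\<forall>B\<in>inv_sets M T. (\<mu> B = 0 \<or> \<mu> B = 1) \<and> (\<mu> B = 0 \<or> \<mu> (space M - B) = 0))"

definition core :: "'a measure \<Rightarrow> ('a set \<Rightarrow> real) \<Rightarrow> ('a set \<Rightarrow> real) set" where
  "core M \<mu> = {P. (\<forall>A\<in>sets M. 0 \<le> P A \<and> P A \<le> 1) \<and> P (space M) = 1 \<and>
     (\<forall>A\<in>sets M. \<forall>B\<in>sets M. A \<inter> B = {} \<longrightarrow> P (A \<union> B) = P A + P B) \<and>
     (\<forall>A\<in>sets M. P A \<le> \<mu> A)}"

definition erg_probs :: "'a measure \<Rightarrow> ('a \<Rightarrow> 'a) \<Rightarrow> ('a set \<Rightarrow> real) set" where
  "erg_probs M T = {P. is_prob M P \<and> sf_invariant M T P \<and>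
     (\<forall>A\<in>inv_sets M T. P A = 0 \<or> P A = 1)}"

end

theory Submission
  imports Defs
begin

text \<open>
  Since the set of probabilities defining V is weak*-compact, V is continuous at the empty set,
  and hence every element of its core is sigma-additive. When V is T-invariant, the core is a
  weak*-compact convex set mapped into itself by the image under T, so a cluster point Q of the
  Cesaro averages of the images of any core element is a T-invariant element of the core.
  If V is ergodic, the value of a core element on an invariant set B is forced: it is 0 if
  V B = 0 and 1 otherwise; so Q is ergodic and all of the core agrees with Q on invariant sets.
  Conversely, V is attained on each set by some core element, so V agrees with Q on invariant
  sets and inherits ergodicity from it.

  Uniqueness holds for any two T-invariant probabilities Q1, Q2 agreeing on invariant sets:
  by the Hahn decomposition Q1 - Q2 attains its maximum on some set Y; the sets maximising
  Q1 - Q2 are closed under countable unions and intersections, and by invariance they contain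
  every preimage of Y under the iterates of T. Thus the T-invariant set limsup of these
  preimages is a maximiser, and as Q1 - Q2 vanishes on it, Q1 \<le> Q2; by symmetry Q1 = Q2.
\<close>

section \<open>Probabilities as measures\<close>

definition prob_measure_of :: "'a measure \<Rightarrow> ('a set \<Rightarrow> real) \<Rightarrow> 'a measure" where
  "prob_measure_of M P = measure_of (space M) (sets M) (\<lambda>A. ennreal (P A))"

lemma sets_prob_measure_of [simp]: "sets (prob_measure_of M P) = sets M"
  unfolding prob_measure_of_def by (simp add: sets.sets_into_space sets.sigma_sets_eq subsetI)

lemma space_prob_measure_of [simp]: "space (prob_measure_of M P) = space M"
  unfolding prob_measure_of_def by (simp add: sets.sets_into_space subsetI)

lemma is_prob_empty:
  assumes "is_prob M P"
  shows "P {} = 0"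
proof -
  have "(\<lambda>n::nat. P {}) sums P {}"
    using assms unfolding is_prob_def by (auto simp: disjoint_family_on_def)
  then show ?thesis
    by (metis LIMSEQ_unique summable_LIMSEQ_zero sums_summable tendsto_const)
qed

lemma is_prob_iff_countably_additive:
  "is_prob M P \<longleftrightarrow> (\<forall>A\<in>sets M. 0 \<le> P A) \<and> P (space M) = 1 \<and>
     countably_additive (sets M) (\<lambda>A. ennreal (P A))"
proof -
  have "(\<Sum>n. ennreal (P (F n))) = ennreal (P (\<Union>n. F n)) \<longleftrightarrow> (\<lambda>n. P (F n)) sums P (\<Union>n. F n)"
    if "\<forall>A\<in>sets M. 0 \<le> P A" "range F \<subseteq> sets M" for F :: "nat \<Rightarrow> 'a set"
    using that by (subst sums_ennreal[symmetric]) (auto simp: sums_iff)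
  then show ?thesis
    unfolding is_prob_def countably_additive_def by blast
qed

lemma
  assumes "is_prob M P"
  shows finite_measure_prob_measure_of: "finite_measure (prob_measure_of M P)"
    and measure_prob_measure_of: "A \<in> sets M \<Longrightarrow> measure (prob_measure_of M P) A = P A"
proof -
  have emeasure: "emeasure (prob_measure_of M P) A = ennreal (P A)" if "A \<in> sets M" for A
    unfolding prob_measure_of_def
  proof (rule emeasure_measure_of_sigma[OF sets.sigma_algebra_axioms _ _ that])
    show "positive (sets M) (\<lambda>A. ennreal (P A))"
      using is_prob_empty[OF assms] by (simp add: positive_def)
    show "countably_additive (sets M) (\<lambda>A. ennreal (P A))"
      using assms by (simp add: is_prob_iff_countably_additive)
  qed
  show "finite_measure (prob_measure_of M P)"
    using emeasure[of "space M"] by (intro finite_measureI) simp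
  show "measure (prob_measure_of M P) A = P A" if "A \<in> sets M"
    using assms emeasure[OF that] that by (simp add: measure_def is_prob_def)
qed

lemma is_prob_decseq_tendsto:
  assumes "is_prob M P" "range A \<subseteq> sets M" "decseq A"
  shows "(\<lambda>n. P (A n)) \<longlonglongrightarrow> P (\<Inter>n. A n)"
proof -
  interpret finite_measure "prob_measure_of M P"
    by (rule finite_measure_prob_measure_of[OF assms(1)])
  have "(\<lambda>n. measure (prob_measure_of M P) (A n)) \<longlonglongrightarrow> measure (prob_measure_of M P) (\<Inter>n. A n)"
    using assms(2,3) by (intro finite_Lim_measure_decseq) auto
  moreover have "(\<Inter>n. A n) \<in> sets M"
    using assms(2) by auto
  ultimately show ?thesis
    using assms(2) by (simp add: measure_prob_measure_of[OF assms(1)] range_subsetD)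
qed

section \<open>The core\<close>

lemma
  assumes "P \<in> core M \<mu>" "A \<in> sets M"
  shows core_nonneg: "0 \<le> P A"
    and core_le_one: "P A \<le> 1"
    and core_le: "P A \<le> \<mu> A"
  using assms unfolding core_def by auto

lemma core_space: "P \<in> core M \<mu> \<Longrightarrow> P (space M) = 1"
  unfolding core_def by blast

lemma core_additive:
  "P \<in> core M \<mu> \<Longrightarrow> A \<in> sets M \<Longrightarrow> B \<in> sets M \<Longrightarrow> A \<inter> B = {} \<Longrightarrow>
    P (A \<union> B) = P A + P B"
  unfolding core_def by blast

lemma core_diff:
  assumes "P \<in> core M \<mu>" "A \<in> sets M" "B \<in> sets M" "A \<subseteq> B"
  shows "P (B - A) = P B - P A"
proof -
  have "P (A \<union> (B - A)) = P A + P (B - A)"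
    using assms by (intro core_additive) auto
  then show ?thesis
    using assms(4) by (simp add: Un_absorb1)
qed

lemma core_compl:
  "P \<in> core M \<mu> \<Longrightarrow> A \<in> sets M \<Longrightarrow> P (space M - A) = 1 - P A"
  using core_diff[of P M \<mu> A "space M"] by (simp add: core_space sets.sets_into_space)

lemma core_mono:
  assumes "P \<in> core M \<mu>" "A \<in> sets M" "B \<in> sets M" "A \<subseteq> B"
  shows "P A \<le> P B"
  using core_diff[OF assms] core_nonneg[OF assms(1), of "B - A"] assms(2,3) by auto

lemma prob_in_core:
  assumes P: "is_prob M P" and le: "\<And>A. A \<in> sets M \<Longrightarrow> P A \<le> \<mu> A"
  shows "P \<in> core M \<mu>"
proof -
  interpret finite_measure "prob_measure_of M P"
    by (rule finite_measure_prob_measure_of[OF P])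
  note measure_P = measure_prob_measure_of[OF P]
  have "P A \<le> P (space M)" if "A \<in> sets M" for A
    using finite_measure_mono[of A "space M"] that
    by (simp add: measure_P sets.sets_into_space)
  moreover have "P (A \<union> B) = P A + P B" if "A \<in> sets M" "B \<in> sets M" "A \<inter> B = {}" for A B
    using finite_measure_Union[of A B] that by (simp add: measure_P)
  ultimately show ?thesis
    using P le unfolding core_def is_prob_def by simp
qed

lemma core_is_prob_if_empty_continuous:
  assumes P: "P \<in> core M \<mu>"
    and cont: "\<And>A. range A \<subseteq> sets M \<Longrightarrow> decseq A \<Longrightarrow> (\<Inter>n. A n) = {} \<Longrightarrow>
      (\<lambda>n. \<mu> (A n)) \<longlonglongrightarrow> 0"
  shows "is_prob M P"
proof -
  have "countably_additive (sets M) (\<lambda>A. ennreal (P A))"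
  proof (rule sets.empty_continuous_imp_countably_additive)
    show "positive (sets M) (\<lambda>A. ennreal (P A))"
      using core_additive[OF P, of "{}" "{}"] by (simp add: positive_def)
    show "additive (sets M) (\<lambda>A. ennreal (P A))"
      using P by (simp add: additive_def core_additive core_nonneg ennreal_plus)
    show "\<forall>A\<in>sets M. ennreal (P A) \<noteq> \<infinity>"
      by simp
    fix A :: "nat \<Rightarrow> 'a set"
    assume A: "range A \<subseteq> sets M" "decseq A" "(\<Inter>n. A n) = {}"
    have "(\<lambda>n. P (A n)) \<longlonglongrightarrow> 0"
      using A by (intro tendsto_sandwich[OF _ _ tendsto_const cont[OF A]])
        (auto intro!: always_eventually core_nonneg[OF P] core_le[OF P])
    then show "(\<lambda>n. ennreal (P (A n))) \<longlonglongrightarrow> 0"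
      by (simp add: tendsto_ennrealI[where x=0, simplified])
  qed
  then show ?thesis
    using P by (simp add: is_prob_iff_countably_additive core_nonneg core_space)
qed

lemma closed_core: "closed (core M \<mu>)"
  unfolding core_def Ball_def
  by (intro closed_Collect_conj closed_Collect_all closed_Collect_imp open_Collect_const
      closed_Collect_le closed_Collect_eq continuous_intros continuous_on_product_coordinates)

lemma restr_sf_in_core_iff: "restr_sf M P \<in> core M \<mu> \<longleftrightarrow> P \<in> core M \<mu>"
  unfolding core_def restr_sf_def by auto

text \<open>Members of the core are arbitrary off sets M, so the core itself is not compact;
  its image under restr_sf is the weak*-compact core of the paper.\<close>

lemma compact_restr_sf_core: "compact (restr_sf M ` core M \<mu>)"
proof -
  define Z :: "('a set \<Rightarrow> real) set" where "Z = {f. \<forall>A. A \<notin> sets M \<longrightarrow> f A = 0}"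
  have "restr_sf M ` core M \<mu> = Pi\<^sub>E UNIV (\<lambda>_. {0..1}) \<inter> (core M \<mu> \<inter> Z)"
  proof (intro equalityI subsetI)
    fix f assume "f \<in> restr_sf M ` core M \<mu>"
    then show "f \<in> Pi\<^sub>E UNIV (\<lambda>_. {0..1}) \<inter> (core M \<mu> \<inter> Z)"
      using core_nonneg core_le_one by (auto simp: restr_sf_in_core_iff) (auto simp: Z_def restr_sf_def)
  next
    fix f assume "f \<in> Pi\<^sub>E UNIV (\<lambda>_. {0..1}) \<inter> (core M \<mu> \<inter> Z)"
    then have "f = restr_sf M f" "f \<in> core M \<mu>"
      by (auto simp: Z_def restr_sf_def)
    then show "f \<in> restr_sf M ` core M \<mu>"
      by blast
  qed
  moreover have "compact (Pi\<^sub>E UNIV (\<lambda>_::'a set. {0..1::real}))"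
    using compactin_PiE[of "\<lambda>_. euclidean" UNIV "\<lambda>_. {0..1::real}"]
    by (simp add: euclidean_product_topology)
  moreover have "closed (core M \<mu> \<inter> Z)"
    unfolding Z_def
    by (intro closed_Int closed_core closed_Collect_all closed_Collect_imp open_Collect_const
        closed_Collect_eq continuous_intros continuous_on_product_coordinates)
  ultimately show ?thesis
    by (simp add: compact_Int_closed)
qed

section \<open>Upper probabilities\<close>

lemma upper_probE:
  assumes "upper_prob M V"
  obtains \<Lambda> where "\<Lambda> \<subseteq> {P. is_prob M P}" "compact (restr_sf M ` \<Lambda>)"
    "\<And>A. A \<in> sets M \<Longrightarrow> \<exists>P\<in>\<Lambda>. P A = V A"
    "\<And>P A. P \<in> \<Lambda> \<Longrightarrow> A \<in> sets M \<Longrightarrow> P A \<le> V A"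
  using assms unfolding upper_prob_def by blast

lemma upper_prob_attained_in_core:
  assumes "upper_prob M V" "A \<in> sets M"
  shows "\<exists>P\<in>core M V. P A = V A"
proof -
  obtain \<Lambda> where \<Lambda>: "\<Lambda> \<subseteq> {P. is_prob M P}" "compact (restr_sf M ` \<Lambda>)"
    "\<And>A. A \<in> sets M \<Longrightarrow> \<exists>P\<in>\<Lambda>. P A = V A"
    "\<And>P A. P \<in> \<Lambda> \<Longrightarrow> A \<in> sets M \<Longrightarrow> P A \<le> V A"
    using upper_probE[OF assms(1)] by metis
  obtain P where "P \<in> \<Lambda>" "P A = V A"
    using \<Lambda>(3)[OF assms(2)] by blast
  moreover have "P \<in> core M V"
    using \<Lambda> \<open>P \<in> \<Lambda>\<close> by (intro prob_in_core) auto
  ultimately show ?thesis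
    by blast
qed

lemma upper_prob_decseq_lower_bound:
  assumes up: "upper_prob M V" and A: "range A \<subseteq> sets M" "decseq A"
    and c: "\<And>n. c \<le> V (A n)"
  shows "\<exists>P. is_prob M P \<and> (\<forall>n. c \<le> P (A n))"
proof -
  obtain \<Lambda> where \<Lambda>: "\<Lambda> \<subseteq> {P. is_prob M P}" "compact (restr_sf M ` \<Lambda>)"
    "\<And>A. A \<in> sets M \<Longrightarrow> \<exists>P\<in>\<Lambda>. P A = V A"
    "\<And>P A. P \<in> \<Lambda> \<Longrightarrow> A \<in> sets M \<Longrightarrow> P A \<le> V A"
    using upper_probE[OF up] by metis
  define C where "C n = {f. c \<le> f (A n)}" for n
  have "restr_sf M ` \<Lambda> \<inter> (\<Inter>n. C n) \<noteq> {}"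
  proof (rule compact_imp_fip_image[OF \<Lambda>(2)])
    show "closed (C n)" for n
      unfolding C_def by (intro closed_Collect_le continuous_on_const continuous_on_product_coordinates)
    fix I :: "nat set"
    assume "finite I"
    define m where "m = Max (insert 0 I)"
    obtain P where P: "P \<in> \<Lambda>" "P (A m) = V (A m)"
      using \<Lambda>(3) A(1) by blast
    have "P \<in> core M V"
      using \<Lambda> P(1) by (intro prob_in_core) auto
    have "restr_sf M P \<in> C i" if "i \<in> I" for i
    proof -
      have "A m \<subseteq> A i"
        using A(2) \<open>finite I\<close> that by (simp add: decseq_def m_def)
      then have "P (A m) \<le> P (A i)"
        using core_mono[OF \<open>P \<in> core M V\<close>] A(1) by blast
      then show ?thesis
        using c[of m] P(2) A(1) by (auto simp: C_def restr_sf_def)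
    qed
    then show "restr_sf M ` \<Lambda> \<inter> (\<Inter>i\<in>I. C i) \<noteq> {}"
      using P(1) by blast
  qed
  then obtain P where "P \<in> \<Lambda>" "\<And>n. restr_sf M P \<in> C n"
    by blast
  then show ?thesis
    using \<Lambda>(1) A(1) by (auto simp: C_def restr_sf_def)
qed

lemma upper_prob_empty_continuous:
  assumes up: "upper_prob M V" and A: "range A \<subseteq> sets M" "decseq A" "(\<Inter>n. A n) = {}"
  shows "(\<lambda>n. V (A n)) \<longlonglongrightarrow> 0"
proof -
  have cap: "is_capacity M V"
    using up unfolding upper_prob_def by blast
  have nonneg: "0 \<le> V (A n)" for n
    using cap A(1) unfolding is_capacity_def by blast
  then have bdd: "bdd_below (range (\<lambda>n. V (A n)))"
    by (intro bdd_belowI[of _ 0]) auto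
  have "decseq (\<lambda>n. V (A n))"
    using cap A unfolding is_capacity_def decseq_def by blast
  then have lim: "(\<lambda>n. V (A n)) \<longlonglongrightarrow> (INF n. V (A n))"
    using bdd by (intro LIMSEQ_decseq_INF)
  obtain P where P: "is_prob M P" "\<And>n. (INF n. V (A n)) \<le> P (A n)"
    using upper_prob_decseq_lower_bound[OF up A(1,2), of "INF n. V (A n)"] cINF_lower[OF bdd]
    by blast
  have "(\<lambda>n. P (A n)) \<longlonglongrightarrow> 0"
    using is_prob_decseq_tendsto[OF P(1) A(1,2)] is_prob_empty[OF P(1)] A(3) by simp
  then have "(INF n. V (A n)) \<le> 0"
    using P(2) by (intro tendsto_lowerbound) auto
  moreover have "0 \<le> (INF n. V (A n))"
    using nonneg by (intro cINF_greatest) auto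
  ultimately show ?thesis
    using lim by simp
qed

lemma upper_prob_core_is_prob: "upper_prob M V \<Longrightarrow> P \<in> core M V \<Longrightarrow> is_prob M P"
  by (rule core_is_prob_if_empty_continuous) (auto intro: upper_prob_empty_continuous)

section \<open>An invariant element of the core\<close>

definition distr_sf :: "'a measure \<Rightarrow> ('a \<Rightarrow> 'a) \<Rightarrow> ('a set \<Rightarrow> real) \<Rightarrow> 'a set \<Rightarrow> real"
  where
  "distr_sf M T P = (\<lambda>A. P (T -` A \<inter> space M))"

lemma distr_sf_in_core:
  assumes T: "T \<in> measurable M M" and inv: "sf_invariant M T \<mu>" and P: "P \<in> core M \<mu>"
  shows "distr_sf M T P \<in> core M \<mu>"
  unfolding core_def distr_sf_def
proof (intro CollectI conjI ballI impI)
  fix A assume A: "A \<in> sets M"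
  have TA: "T -` A \<inter> space M \<in> sets M"
    using T A by (rule measurable_sets)
  show "0 \<le> P (T -` A \<inter> space M)" "P (T -` A \<inter> space M) \<le> 1"
    using P TA by (auto intro: core_nonneg core_le_one)
  show "P (T -` A \<inter> space M) \<le> \<mu> A"
    using core_le[OF P TA] inv A unfolding sf_invariant_def by simp
next
  have "T -` space M \<inter> space M = space M"
    using measurable_space[OF T] by auto
  then show "P (T -` space M \<inter> space M) = 1"
    using P by (simp add: core_space)
next
  fix A B assume "A \<in> sets M" "B \<in> sets M" "A \<inter> B = {}"
  moreover have "T -` (A \<union> B) \<inter> space M = (T -` A \<inter> space M) \<union> (T -` B \<inter> space M)"
    by blast
  ultimately show "P (T -` (A \<union> B) \<inter> space M) = P (T -` A \<inter> space M) + P (T -` B \<inter> space M)"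
    using P measurable_sets[OF T] by (simp add: core_additive disjoint_iff)
qed

lemma core_average:
  assumes G: "\<And>k. k < n \<Longrightarrow> G k \<in> core M \<mu>" and n: "0 < n"
  shows "(\<lambda>A. (\<Sum>k<n. G k A) / real n) \<in> core M \<mu>"
proof -
  have le: "(\<Sum>k<n. G k A) / real n \<le> c" if "\<And>k. k < n \<Longrightarrow> G k A \<le> c" for A c
    using sum_mono[of "{..<n}" "\<lambda>k. G k A" "\<lambda>_. c"] that n by (simp add: pos_divide_le_eq mult.commute)
  show ?thesis
    unfolding core_def
  proof (intro CollectI conjI ballI impI)
    fix A assume A: "A \<in> sets M"
    show "0 \<le> (\<Sum>k<n. G k A) / real n"
      using G A by (intro divide_nonneg_nonneg sum_nonneg) (auto intro: core_nonneg)
    show "(\<Sum>k<n. G k A) / real n \<le> 1"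
      using G A by (intro le) (rule core_le_one)
    show "(\<Sum>k<n. G k A) / real n \<le> \<mu> A"
      using G A by (intro le) (rule core_le)
  next
    have "(\<Sum>k<n. G k (space M)) = (\<Sum>k<n. 1)"
      using G by (intro sum.cong) (auto intro: core_space)
    then show "(\<Sum>k<n. G k (space M)) / real n = 1"
      using n by simp
  next
    fix A B assume "A \<in> sets M" "B \<in> sets M" "A \<inter> B = {}"
    then have "(\<Sum>k<n. G k (A \<union> B)) = (\<Sum>k<n. G k A + G k B)"
      using G by (intro sum.cong) (auto intro: core_additive)
    then show "(\<Sum>k<n. G k (A \<union> B)) / real n = (\<Sum>k<n. G k A) / real n + (\<Sum>k<n. G k B) / real n"
      by (simp add: sum.distrib add_divide_distrib)
  qed
qed

lemma cluster_point_limit: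
  fixes g :: "'a::topological_space \<Rightarrow> 'b::t2_space"
  assumes "inf (nhds x) F \<noteq> bot" "continuous_on UNIV g" "(g \<longlongrightarrow> c) F"
  shows "g x = c"
proof (rule tendsto_unique[OF assms(1)])
  show "(g \<longlongrightarrow> g x) (inf (nhds x) F)"
    using assms(2) by (intro tendsto_mono[OF inf_le1]) (simp add: continuous_on_def tendsto_at_iff_tendsto_nhds)
  show "(g \<longlongrightarrow> c) (inf (nhds x) F)"
    using assms(3) by (rule tendsto_mono[OF inf_le2])
qed

lemma exists_invariant_in_core:
  assumes T: "T \<in> measurable M M" and inv: "sf_invariant M T \<mu>" and P: "P \<in> core M \<mu>"
  shows "\<exists>Q\<in>core M \<mu>. sf_invariant M T Q"
proof -
  define s where "s n = (\<lambda>A. (\<Sum>k<Suc n. (distr_sf M T ^^ k) P A) / real (Suc n))" for n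
  have iterate_core: "(distr_sf M T ^^ k) P \<in> core M \<mu>" for k
    by (induction k) (simp_all add: P distr_sf_in_core[OF T inv])
  have s_core: "s n \<in> core M \<mu>" for n
    unfolding s_def by (rule core_average) (simp_all add: iterate_core)
  have drift: "distr_sf M T (s n) A - s n A = ((distr_sf M T ^^ Suc n) P A - P A) / real (Suc n)"
    for n A
  proof -
    have "distr_sf M T (s n) A - s n A =
      (\<Sum>k<Suc n. (distr_sf M T ^^ Suc k) P A - (distr_sf M T ^^ k) P A) / real (Suc n)"
      by (simp add: s_def distr_sf_def sum_subtractf diff_divide_distrib del: sum.lessThan_Suc)
    then show ?thesis
      by (subst (asm) sum_lessThan_telescope) simp
  qed
  have drift_tendsto: "(\<lambda>n. distr_sf M T (s n) A - s n A) \<longlonglongrightarrow> 0" if A: "A \<in> sets M" for A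
  proof (rule Lim_null_comparison[OF always_eventually LIMSEQ_inverse_real_of_nat], intro allI)
    fix n
    have "\<bar>(distr_sf M T ^^ Suc n) P A - P A\<bar> \<le> 1"
      using core_nonneg[OF iterate_core A, of "Suc n"] core_le_one[OF iterate_core A, of "Suc n"]
        core_nonneg[OF P A] core_le_one[OF P A]
      by (simp only: abs_le_iff) linarith
    then show "norm (distr_sf M T (s n) A - s n A) \<le> inverse (real (Suc n))"
      by (simp add: drift divide_inverse abs_mult)
  qed
  txt \<open>The product topology on functions is not first countable, so instead of a convergent
    subsequence of the averages we take a cluster point of their filter.\<close>
  define F where "F = filtermap (\<lambda>n. restr_sf M (s n)) sequentially"
  have "F \<noteq> bot" "eventually (\<lambda>f. f \<in> restr_sf M ` core M \<mu>) F"
    using s_core by (simp_all add: F_def filtermap_bot_iff eventually_filtermap)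
  then obtain x where x: "x \<in> restr_sf M ` core M \<mu>" "inf (nhds x) F \<noteq> bot"
    using compact_restr_sf_core[unfolded compact_filter] by blast
  have "sf_invariant M T x"
    unfolding sf_invariant_def
  proof
    fix A assume A: "A \<in> sets M"
    have TA: "T -` A \<inter> space M \<in> sets M"
      using T A by (rule measurable_sets)
    define g where "g f = f (T -` A \<inter> space M) - f A" for f :: "'a set \<Rightarrow> real"
    have "g x = 0"
    proof (rule cluster_point_limit[OF x(2)])
      show "continuous_on UNIV g"
        unfolding g_def
        by (intro continuous_on_diff continuous_on_product_coordinates)
      show "(g \<longlongrightarrow> 0) F"
        using drift_tendsto[OF A] A TA
        by (simp add: F_def filterlim_filtermap g_def restr_sf_def distr_sf_def)
    qed
    then show "x (T -` A \<inter> space M) = x A"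
      by (simp add: g_def)
  qed
  moreover have "x \<in> core M \<mu>"
    using x(1) restr_sf_in_core_iff by blast
  ultimately show ?thesis
    by blast
qed

section \<open>Invariant probabilities are determined on invariant sets\<close>

lemma measurable_funpow: "T \<in> measurable M M \<Longrightarrow> T ^^ n \<in> measurable M M"
  by (induction n) (simp_all add: measurable_comp)

lemma funpow_vimage_invariant:
  assumes T: "T \<in> measurable M M"
    and inv: "\<And>A. A \<in> sets M \<Longrightarrow> f (T -` A \<inter> space M) = f A" and A: "A \<in> sets M"
  shows "f ((T ^^ n) -` A \<inter> space M) = f A"
  using A
proof (induction n arbitrary: A)
  case 0
  then show ?case
    using sets.sets_into_space by (simp add: Int_absorb2)
next
  case (Suc n)
  have "(T ^^ Suc n) -` A \<inter> space M = (T ^^ n) -` (T -` A \<inter> space M) \<inter> space M"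
    using measurable_space[OF measurable_funpow[OF T]] by auto
  then have "f ((T ^^ Suc n) -` A \<inter> space M) = f ((T ^^ n) -` (T -` A \<inter> space M) \<inter> space M)"
    by (rule arg_cong)
  also have "\<dots> = f (T -` A \<inter> space M)"
    by (rule Suc.IH[OF measurable_sets[OF T Suc.prems]])
  also have "\<dots> = f A"
    by (rule inv[OF Suc.prems])
  finally show ?case .
qed

lemma vimage_limsup_funpow:
  assumes T: "T \<in> measurable M M"
  shows "T -` limsup (\<lambda>n. (T ^^ n) -` Y \<inter> space M) \<inter> space M = limsup (\<lambda>n. (T ^^ n) -` Y \<inter> space M)"
proof (intro equalityI subsetI)
  fix x assume x: "x \<in> T -` limsup (\<lambda>n. (T ^^ n) -` Y \<inter> space M) \<inter> space M"
  have "\<exists>n\<ge>N. x \<in> (T ^^ n) -` Y \<inter> space M" for N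
  proof -
    obtain n where "n \<ge> N" "(T ^^ n) (T x) \<in> Y"
      using x by (auto simp: limsup_INF_SUP)
    then show ?thesis
      using x by (intro exI[of _ "Suc n"]) (auto simp: funpow_swap1)
  qed
  then show "x \<in> limsup (\<lambda>n. (T ^^ n) -` Y \<inter> space M)"
    by (auto simp: limsup_INF_SUP)
next
  fix x assume x: "x \<in> limsup (\<lambda>n. (T ^^ n) -` Y \<inter> space M)"
  then have "x \<in> space M"
    by (auto simp: limsup_INF_SUP)
  then have Tx: "T x \<in> space M"
    using measurable_space[OF T] by blast
  have "\<exists>n\<ge>N. T x \<in> (T ^^ n) -` Y \<inter> space M" for N
  proof -
    obtain n where n: "n \<ge> Suc N" "(T ^^ n) x \<in> Y"
      using x by (auto simp: limsup_INF_SUP)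
    then obtain m where "n = Suc m" "m \<ge> N"
      by (cases n) auto
    then show ?thesis
      using n Tx by (intro exI[of _ m]) (auto simp: funpow_swap1)
  qed
  then show "x \<in> T -` limsup (\<lambda>n. (T ^^ n) -` Y \<inter> space M) \<inter> space M"
    using \<open>x \<in> space M\<close> by (auto simp: limsup_INF_SUP)
qed

locale finite_measure_pair = N1: finite_measure N1 + N2: finite_measure N2
  for N1 N2 :: "'a measure" +
  assumes sets_eq: "sets N2 = sets N1"
begin

definition signed :: "'a set \<Rightarrow> real" where
  "signed A = measure N1 A - measure N2 A"

definition maximal_set :: "'a set \<Rightarrow> bool" where
  "maximal_set Y \<longleftrightarrow> Y \<in> sets N1 \<and> (\<forall>A\<in>sets N1. signed A \<le> signed Y)"

lemma signed_split:
  assumes "A \<in> sets N1" "B \<in> sets N1"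
  shows "signed A = signed (A \<inter> B) + signed (A - B)"
proof -
  have "A = (A \<inter> B) \<union> (A - B)" "(A \<inter> B) \<inter> (A - B) = {}"
    by auto
  then show ?thesis
    using N1.finite_measure_Union[of "A \<inter> B" "A - B"] N2.finite_measure_Union[of "A \<inter> B" "A - B"]
      assms sets_eq by (simp add: signed_def)
qed

lemma signed_Un_Int:
  assumes "A \<in> sets N1" "B \<in> sets N1"
  shows "signed (A \<union> B) + signed (A \<inter> B) = signed A + signed B"
  using signed_split[of "A \<union> B" A] signed_split[of B A] assms
  by (simp add: Int_absorb2 Int_commute Un_Diff)

lemma exists_maximal_set: "\<exists>Y. maximal_set Y"
proof -
  obtain Y where Y: "Y \<in> sets N1"
    and pos: "\<forall>X\<in>sets N1. X \<subseteq> Y \<longrightarrow> emeasure N2 X \<le> emeasure N1 X"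
    and neg: "\<forall>X\<in>sets N1. X \<inter> Y = {} \<longrightarrow> emeasure N1 X \<le> emeasure N2 X"
    using finite_unsigned_Hahn_decomposition[OF N1.finite_measure_axioms N2.finite_measure_axioms sets_eq]
    by (elim bexE conjE)
  have "signed A \<le> signed Y" if A: "A \<in> sets N1" for A
  proof -
    have "emeasure N1 (A - Y) \<le> emeasure N2 (A - Y)" "emeasure N2 (Y - A) \<le> emeasure N1 (Y - A)"
      using neg pos A Y by auto
    then have "signed (A - Y) \<le> 0" "0 \<le> signed (Y - A)"
      unfolding signed_def N1.emeasure_eq_measure N2.emeasure_eq_measure
      by (simp_all add: ennreal_le_iff)
    then show ?thesis
      using signed_split[OF A Y] signed_split[OF Y A] by (simp add: Int_commute)
  qed
  then show ?thesis
    using Y unfolding maximal_set_def by blast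
qed

lemma maximal_set_eq: "maximal_set Y \<Longrightarrow> maximal_set Z \<Longrightarrow> signed Y = signed Z"
  unfolding maximal_set_def by (simp add: order_antisym)

lemma maximal_set_Un_Int:
  assumes "maximal_set Y" "maximal_set Z"
  shows "maximal_set (Y \<union> Z)" "maximal_set (Y \<inter> Z)"
proof -
  have sets: "Y \<in> sets N1" "Z \<in> sets N1"
    using assms unfolding maximal_set_def by auto
  have "signed (Y \<union> Z) \<le> signed Y" "signed (Y \<inter> Z) \<le> signed Y" "signed Z = signed Y"
    using assms sets maximal_set_eq unfolding maximal_set_def by auto
  then have "signed (Y \<union> Z) = signed Y" "signed (Y \<inter> Z) = signed Y"
    using signed_Un_Int[OF sets] by linarith+
  then show "maximal_set (Y \<union> Z)" "maximal_set (Y \<inter> Z)"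
    using assms(1) sets unfolding maximal_set_def by auto
qed

lemma maximal_set_limit:
  assumes max: "\<And>n. maximal_set (Y n)" and lim: "(\<lambda>n. signed (Y n)) \<longlonglongrightarrow> signed L"
    and L: "L \<in> sets N1"
  shows "maximal_set L"
proof -
  have "(\<lambda>n. signed (Y n)) = (\<lambda>n. signed (Y 0))"
    using maximal_set_eq[OF max max] by blast
  then have "signed L = signed (Y 0)"
    using lim LIMSEQ_unique by auto
  then show ?thesis
    using max[of 0] L unfolding maximal_set_def by simp
qed

lemma maximal_set_UN:
  fixes Y :: "nat \<Rightarrow> 'a set"
  assumes max: "\<And>n. maximal_set (Y n)"
  shows "maximal_set (\<Union>n. Y n)"
proof -
  have partial: "maximal_set (\<Union>i\<le>n. Y i)" for n
    by (induction n) (simp_all add: atMost_Suc max maximal_set_Un_Int(1))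
  have sets: "range (\<lambda>n. \<Union>i\<le>n. Y i) \<subseteq> sets N1"
    using partial unfolding maximal_set_def by blast
  have eq: "(\<Union>n. \<Union>i\<le>n. Y i) = (\<Union>n. Y n)"
    by auto
  have "(\<lambda>n. signed (\<Union>i\<le>n. Y i)) \<longlonglongrightarrow> signed (\<Union>n. Y n)"
    unfolding signed_def eq[symmetric] using sets sets_eq
    by (intro tendsto_diff N1.finite_Lim_measure_incseq N2.finite_Lim_measure_incseq monoI UN_mono)
       auto
  moreover have "(\<Union>n. Y n) \<in> sets N1"
    using max unfolding maximal_set_def by (intro sets.countable_UN) auto
  ultimately show ?thesis
    by (rule maximal_set_limit[OF partial])
qed

lemma maximal_set_INT:
  fixes Y :: "nat \<Rightarrow> 'a set"
  assumes max: "\<And>n. maximal_set (Y n)"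
  shows "maximal_set (\<Inter>n. Y n)"
proof -
  have partial: "maximal_set (\<Inter>i\<le>n. Y i)" for n
    by (induction n) (simp_all add: atMost_Suc max maximal_set_Un_Int(2))
  have sets: "range (\<lambda>n. \<Inter>i\<le>n. Y i) \<subseteq> sets N1"
    using partial unfolding maximal_set_def by blast
  have eq: "(\<Inter>n. \<Inter>i\<le>n. Y i) = (\<Inter>n. Y n)"
    by auto
  have "(\<lambda>n. signed (\<Inter>i\<le>n. Y i)) \<longlonglongrightarrow> signed (\<Inter>n. Y n)"
    unfolding signed_def eq[symmetric] using sets sets_eq
    by (intro tendsto_diff N1.finite_Lim_measure_decseq N2.finite_Lim_measure_decseq antimonoI INT_anti_mono)
       auto
  moreover have "(\<Inter>n. Y n) \<in> sets N1"
    using max unfolding maximal_set_def by (intro sets.countable_INT) auto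
  ultimately show ?thesis
    by (rule maximal_set_limit[OF partial])
qed

lemma maximal_set_limsup:
  fixes Y :: "nat \<Rightarrow> 'a set"
  assumes "\<And>n. maximal_set (Y n)"
  shows "maximal_set (limsup Y)"
proof -
  have "(\<Union>m\<in>{n..}. Y m) = (\<Union>k. Y (k + n))" for n
    by (auto, metis le_add_diff_inverse2, fastforce)
  then show ?thesis
    using assms by (simp add: limsup_INF_SUP maximal_set_INT maximal_set_UN)
qed

lemma measure_le_if_invariant:
  assumes T: "T \<in> measurable N1 N1"
    and inv1: "\<And>A. A \<in> sets N1 \<Longrightarrow> measure N1 (T -` A \<inter> space N1) = measure N1 A"
    and inv2: "\<And>A. A \<in> sets N1 \<Longrightarrow> measure N2 (T -` A \<inter> space N1) = measure N2 A"
    and agree: "\<And>A. A \<in> sets N1 \<Longrightarrow> T -` A \<inter> space N1 = A \<Longrightarrow> measure N1 A = measure N2 A"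
    and A: "A \<in> sets N1"
  shows "measure N1 A \<le> measure N2 A"
proof -
  obtain Y where Y: "maximal_set Y"
    using exists_maximal_set by blast
  define Z where "Z n = (T ^^ n) -` Y \<inter> space N1" for n
  have "maximal_set (Z n)" for n
  proof -
    have "Y \<in> sets N1"
      using Y unfolding maximal_set_def by blast
    then have "signed (Z n) = signed Y"
      unfolding Z_def using inv1 inv2 by (intro funpow_vimage_invariant[OF T]) (simp add: signed_def)
    moreover have "Z n \<in> sets N1"
      unfolding Z_def using measurable_funpow[OF T] \<open>Y \<in> sets N1\<close> by (rule measurable_sets)
    ultimately show ?thesis
      using Y unfolding maximal_set_def by simp
  qed
  then have max: "maximal_set (limsup Z)"
    by (rule maximal_set_limsup)
  have "T -` limsup Z \<inter> space N1 = limsup Z"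
    unfolding Z_def by (rule vimage_limsup_funpow[OF T])
  moreover have "limsup Z \<in> sets N1"
    using max unfolding maximal_set_def by blast
  ultimately have "signed (limsup Z) = 0"
    using agree unfolding signed_def by simp
  moreover have "signed A \<le> signed (limsup Z)"
    using max A unfolding maximal_set_def by blast
  ultimately show ?thesis
    unfolding signed_def by simp
qed

end

lemma invariant_finite_measures_eq:
  assumes N1: "finite_measure N1" and N2: "finite_measure N2" and same_sets: "sets N2 = sets N1"
    and T: "T \<in> measurable N1 N1"
    and inv1: "\<And>A. A \<in> sets N1 \<Longrightarrow> measure N1 (T -` A \<inter> space N1) = measure N1 A"
    and inv2: "\<And>A. A \<in> sets N1 \<Longrightarrow> measure N2 (T -` A \<inter> space N1) = measure N2 A"
    and agree: "\<And>A. A \<in> sets N1 \<Longrightarrow> T -` A \<inter> space N1 = A \<Longrightarrow> measure N1 A = measure N2 A"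
    and A: "A \<in> sets N1"
  shows "measure N1 A = measure N2 A"
proof (rule antisym)
  interpret finite_measure_pair N1 N2
    by (intro finite_measure_pair.intro finite_measure_pair_axioms.intro N1 N2 same_sets)
  show "measure N1 A \<le> measure N2 A"
    using T inv1 inv2 agree A by (rule measure_le_if_invariant)
next
  interpret finite_measure_pair N2 N1
    by (intro finite_measure_pair.intro finite_measure_pair_axioms.intro N1 N2 same_sets[symmetric])
  have space_eq: "space N2 = space N1"
    using same_sets by (rule sets_eq_imp_space_eq)
  show "measure N2 A \<le> measure N1 A"
  proof (rule measure_le_if_invariant)
    show "T \<in> measurable N2 N2"
      using T by (simp add: measurable_cong_sets[OF same_sets same_sets])
    show "measure N2 (T -` B \<inter> space N2) = measure N2 B"
      "measure N1 (T -` B \<inter> space N2) = measure N1 B" if "B \<in> sets N2" for B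
      using inv1 inv2 that by (simp_all add: same_sets space_eq)
    show "measure N2 B = measure N1 B" if "B \<in> sets N2" "T -` B \<inter> space N2 = B" for B
      using agree[of B] that by (simp add: same_sets space_eq)
  qed (simp add: same_sets A)
qed

lemma invariant_probs_eq:
  assumes T: "T \<in> measurable M M"
    and Q1: "is_prob M Q1" "sf_invariant M T Q1" and Q2: "is_prob M Q2" "sf_invariant M T Q2"
    and agree: "\<And>A. A \<in> inv_sets M T \<Longrightarrow> Q1 A = Q2 A"
    and A: "A \<in> sets M"
  shows "Q1 A = Q2 A"
proof -
  let ?N1 = "prob_measure_of M Q1" and ?N2 = "prob_measure_of M Q2"
  note measure_N1 = measure_prob_measure_of[OF Q1(1)] and measure_N2 = measure_prob_measure_of[OF Q2(1)]
  have "measure ?N1 A = measure ?N2 A"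
  proof (rule invariant_finite_measures_eq)
    show "finite_measure ?N1" "finite_measure ?N2"
      using Q1(1) Q2(1) by (simp_all add: finite_measure_prob_measure_of)
    show "T \<in> measurable ?N1 ?N1"
      using T by (simp only: measurable_cong_sets[OF sets_prob_measure_of sets_prob_measure_of])
    fix B assume "B \<in> sets ?N1"
    then have B: "B \<in> sets M" and TB: "T -` B \<inter> space M \<in> sets M"
      using measurable_sets[OF T] by auto
    show "measure ?N1 (T -` B \<inter> space ?N1) = measure ?N1 B"
      using Q1(2) B TB unfolding sf_invariant_def by (simp add: measure_N1)
    show "measure ?N2 (T -` B \<inter> space ?N1) = measure ?N2 B"
      using Q2(2) B TB unfolding sf_invariant_def by (simp add: measure_N2)
    show "measure ?N1 B = measure ?N2 B" if "T -` B \<inter> space ?N1 = B"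
      using that agree[of B] B by (simp add: measure_N1 measure_N2 inv_sets_def)
  qed (simp_all add: A)
  then show ?thesis
    using A by (simp add: measure_N1 measure_N2)
qed

section \<open>Ergodicity\<close>

lemma inv_sets_compl:
  "T \<in> measurable M M \<Longrightarrow> B \<in> inv_sets M T \<Longrightarrow> space M - B \<in> inv_sets M T"
  unfolding inv_sets_def by (auto simp: measurable_space)

lemma core_on_inv_sets_if_cap_ergodic:
  assumes erg: "cap_ergodic M T V" and P: "P \<in> core M V" and B: "B \<in> inv_sets M T"
  shows "P B = (if V B = 0 then 0 else 1)"
proof -
  have Bs: "B \<in> sets M"
    using B by (simp add: inv_sets_def)
  have "V B = 0 \<or> V (space M - B) = 0"
    using erg B unfolding cap_ergodic_def by blast
  then show ?thesis
  proof
    assume "V B = 0"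
    then show ?thesis
      using core_le[OF P Bs] core_nonneg[OF P Bs] by simp
  next
    assume "V (space M - B) = 0"
    then have "P (space M - B) = 0"
      using core_le[OF P] core_nonneg[OF P] Bs by (metis order_antisym sets.compl_sets)
    then have "P B = 1"
      using core_compl[OF P Bs] by simp
    then show ?thesis
      using core_le[OF P Bs] by auto
  qed
qed

lemma ergodic_core_element_if_cap_ergodic:
  assumes T: "T \<in> measurable M M" and up: "upper_prob M V" and inv: "sf_invariant M T V"
    and erg: "cap_ergodic M T V"
  shows "\<exists>Q\<in>erg_probs M T \<inter> core M V. \<forall>P\<in>core M V. \<forall>A\<in>inv_sets M T. P A = Q A"
proof -
  obtain P where "P \<in> core M V"
    using upper_prob_attained_in_core[OF up sets.top] by blast
  then obtain Q where Q: "Q \<in> core M V" "sf_invariant M T Q"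
    using exists_invariant_in_core[OF T inv] by blast
  have "Q \<in> erg_probs M T"
    unfolding erg_probs_def
    using upper_prob_core_is_prob[OF up Q(1)] Q(2) core_on_inv_sets_if_cap_ergodic[OF erg Q(1)] by simp
  moreover have "P A = Q A" if "P \<in> core M V" "A \<in> inv_sets M T" for P A
    using core_on_inv_sets_if_cap_ergodic[OF erg that] core_on_inv_sets_if_cap_ergodic[OF erg Q(1) that(2)]
    by simp
  ultimately show ?thesis
    using Q(1) by blast
qed

lemma cap_ergodic_if_ergodic_core_element:
  assumes T: "T \<in> measurable M M" and up: "upper_prob M V" and inv: "sf_invariant M T V"
    and Q: "Q \<in> erg_probs M T" "Q \<in> core M V"
    and agree: "\<And>P A. P \<in> core M V \<Longrightarrow> A \<in> inv_sets M T \<Longrightarrow> P A = Q A"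
  shows "cap_ergodic M T V"
  unfolding cap_ergodic_def
proof (rule conjI[OF inv], intro ballI)
  have V_eq_Q: "V B = Q B" if "B \<in> inv_sets M T" for B
  proof -
    have "B \<in> sets M"
      using that by (simp add: inv_sets_def)
    then obtain P where "P \<in> core M V" "P B = V B"
      using upper_prob_attained_in_core[OF up] by blast
    then show ?thesis
      using agree that by metis
  qed
  fix B assume B: "B \<in> inv_sets M T"
  have "Q B = 0 \<or> Q B = 1"
    using Q(1) B unfolding erg_probs_def by blast
  moreover have "Q (space M - B) = 1 - Q B"
    using core_compl[OF Q(2)] B by (simp add: inv_sets_def)
  ultimately show "(V B = 0 \<or> V B = 1) \<and> (V B = 0 \<or> V (space M - B) = 0)"
    using V_eq_Q[OF B] V_eq_Q[OF inv_sets_compl[OF T B]] by auto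
qed

theorem theorem3p2:
  fixes M :: "'a measure" and T :: "'a \<Rightarrow> 'a" and V :: "'a set \<Rightarrow> real"
  assumes "T \<in> measurable M M"
    and "upper_prob M V"
    and "sf_invariant M T V"
  shows "(cap_ergodic M T V \<longleftrightarrow>
            (\<exists>Q\<in>erg_probs M T \<inter> core M V.
               \<forall>P\<in>core M V. \<forall>A\<in>inv_sets M T. P A = Q A))
       \<and> (\<forall>Q1 Q2.
            Q1 \<in> erg_probs M T \<inter> core M V \<and> (\<forall>P\<in>core M V. \<forall>A\<in>inv_sets M T. P A = Q1 A) \<and>
            Q2 \<in> erg_probs M T \<inter> core M V \<and> (\<forall>P\<in>core M V. \<forall>A\<in>inv_sets M T. P A = Q2 A)
            \<longrightarrow> (\<forall>A\<in>sets M. Q1 A = Q2 A))"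
proof (intro conjI allI impI ballI)
  show "cap_ergodic M T V \<longleftrightarrow>
      (\<exists>Q\<in>erg_probs M T \<inter> core M V. \<forall>P\<in>core M V. \<forall>A\<in>inv_sets M T. P A = Q A)"
    using ergodic_core_element_if_cap_ergodic[OF assms] cap_ergodic_if_ergodic_core_element[OF assms]
    by blast
next
  fix Q1 Q2 A
  assume Q: "Q1 \<in> erg_probs M T \<inter> core M V \<and> (\<forall>P\<in>core M V. \<forall>A\<in>inv_sets M T. P A = Q1 A) \<and>
    Q2 \<in> erg_probs M T \<inter> core M V \<and> (\<forall>P\<in>core M V. \<forall>A\<in>inv_sets M T. P A = Q2 A)"
    and A: "A \<in> sets M"
  show "Q1 A = Q2 A"
  proof (rule invariant_probs_eq[OF assms(1) _ _ _ _ _ A])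
    show "is_prob M Q1" "sf_invariant M T Q1" "is_prob M Q2" "sf_invariant M T Q2"
      using Q unfolding erg_probs_def by auto
    show "Q1 B = Q2 B" if "B \<in> inv_sets M T" for B
      using Q that by auto
  qed
qed

end
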